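(* Let $\Gamma$ be a maximal consistent set of SBTrust, and let $\varphi,\psi$ be propositional formulas with $\psi\notin\rightsquigarrow_\varphi(\Gamma)$. Then there exists a maximal consistent set $\Delta\in[\Gamma]_\leftrightsquigarrow$ such that $\{\neg\psi\}\cup\rightsquigarrow_\varphi(\Gamma)\subseteq\Delta$.
   Context: $\mathcal{L}_T$: $\alpha::=\varphi\mid\varphi\rightsquigarrow\varphi\mid B(\alpha)\mid\alpha*\alpha\mid\neg\alpha$, with $\varphi$ ranging over classical propositional formulas (built from variables, $\bot$, $\land,\lor,\to,\leftrightarrow,\neg$) and $*\in\{\land,\lor,\to,\leftrightarrow\}$. SBTrust is the Hilbert system ($\varphi,\psi,\chi,\varphi_i,\psi_i$ propositional; $\alpha,\beta\in\mathcal{L}_T$; rule outputs must lie in $\mathcal{L}_T$): classical tautologies and Modus Ponens; $\varphi\rightsquigarrow\varphi$; $(\varphi\rightsquigarrow\bot)\to\neg\varphi$; $((\psi\land\chi)\rightsquigarrow\varphi)\to(\psi\rightsquigarrow(\chi\to\varphi))$; $(\neg(\varphi\leftrightarrow\psi)\rightsquigarrow\bot)\to((\varphi\rightsquigarrow\chi)\leftrightarrow(\psi\rightsquigarrow\chi))$; rule RCK: from $(\varphi_1\land\dots\land\varphi_n)\to\varphi_{n+1}$ infer $\bigwedge_{j\le n}(\psi\rightsquigarrow\varphi_j)\to(\psi\rightsquigarrow\varphi_{n+1})$; rule $\mathbf{S5_F}$: from $(\ell_1\land\dots\land\ell_n)\to\chi$ infer $(\ell_1\land\dots\land\ell_n)\to(\neg\chi\rightsquigarrow\bot)$,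 each $\ell_j$ being $\varphi_j\rightsquigarrow\psi_j$ or its negation, $\chi$ propositional; $B(\alpha\to\beta)\to(B\alpha\to B\beta)$; $B\alpha\to\neg B\neg\alpha$; $B\alpha\to BB\alpha$; necessitation for $B$. A maximal consistent set (MCS) is $\Gamma\subseteq\mathcal{L}_T$ with $\Gamma\nvdash\bot$ and, for every $\alpha\in\mathcal{L}_T$, $\alpha\in\Gamma$ or $\neg\alpha\in\Gamma$. For $\Gamma\subseteq\mathcal{L}_T$: $\Gamma^\rightsquigarrow$ is the set of formulas of the form $\chi\rightsquigarrow\psi$ in $\Gamma$; for MCSs, $\Gamma\leftrightsquigarrow\Delta$ iff $\Gamma^\rightsquigarrow=\Delta^\rightsquigarrow$ (an equivalence relation), and $[\Gamma]_\leftrightsquigarrow$ is the equivalence class of $\Gamma$; $\rightsquigarrow_\varphi(\Gamma)=\{\psi:\varphi\rightsquigarrow\psi\in\Gamma\}$. *)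

theory Defs
  imports Main
begin

text \<open>A single syntax for both layers: propositional formulas are those
without conditionals and belief; L_T is the set of well-formed formulas.\<close>

datatype fm =
    Var nat
  | Bot
  | And fm fm
  | Or fm fm
  | Imp fm fm
  | Iff fm fm
  | Neg fm
  | Cond fm fm
  | Bel fm

fun propf :: "fm \<Rightarrow> bool" where
  "propf (Var n) = True"
| "propf Bot = True"
| "propf (And a b) = (propf a \<and> propf b)"
| "propf (Or a b) = (propf a \<and> propf b)"
| "propf (Imp a b) = (propf a \<and> propf b)"
| "propf (Iff a b) = (propf a \<and> propf b)"
| "propf (Neg a) = propf a"
| "propf (Cond a b) = False"
| "propf (Bel a) = False"

fun wf :: "fm \<Rightarrow> bool" where
  "wf (Var n) = True"
| "wf Bot = True"
| "wf (And a b) = (wf a \<and> wf b)"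
| "wf (Or a b) = (wf a \<and> wf b)"
| "wf (Imp a b) = (wf a \<and> wf b)"
| "wf (Iff a b) = (wf a \<and> wf b)"
| "wf (Neg a) = wf a"
| "wf (Cond a b) = (propf a \<and> propf b)"
| "wf (Bel a) = wf a"

fun eval :: "(fm \<Rightarrow> bool) \<Rightarrow> fm \<Rightarrow> bool" where
  "eval v (Var n) = v (Var n)"
| "eval v Bot = False"
| "eval v (And a b) = (eval v a \<and> eval v b)"
| "eval v (Or a b) = (eval v a \<or> eval v b)"
| "eval v (Imp a b) = (eval v a \<longrightarrow> eval v b)"
| "eval v (Iff a b) = (eval v a \<longleftrightarrow> eval v b)"
| "eval v (Neg a) = (\<not> eval v a)"
| "eval v (Cond a b) = v (Cond a b)"
| "eval v (Bel a) = v (Bel a)"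

definition tautology :: "fm \<Rightarrow> bool" where
  "tautology a \<longleftrightarrow> (\<forall>v. eval v a)"

definition Top :: fm where "Top = Neg Bot"

fun conj :: "fm list \<Rightarrow> fm" where
  "conj [] = Top"
| "conj [a] = a"
| "conj (a # b # xs) = And a (conj (b # xs))"

definition literal :: "fm \<Rightarrow> bool" where
  "literal l \<longleftrightarrow> (\<exists>a b. propf a \<and> propf b \<and> (l = Cond a b \<or> l = Neg (Cond a b)))"

inductive sbthm :: "fm \<Rightarrow> bool" where
  Taut: "wf a \<Longrightarrow> tautology a \<Longrightarrow> sbthm a"
| MP: "sbthm a \<Longrightarrow> sbthm (Imp a b) \<Longrightarrow> sbthm b"
| Id: "propf p \<Longrightarrow> sbthm (Cond p p)"
| CBot: "propf p \<Longrightarrow> sbthm (Imp (Cond p Bot) (Neg p))"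
| Exp: "propf p \<Longrightarrow> propf q \<Longrightarrow> propf c \<Longrightarrow>
          sbthm (Imp (Cond (And q c) p) (Cond q (Imp c p)))"
| Ext: "propf p \<Longrightarrow> propf q \<Longrightarrow> propf c \<Longrightarrow>
          sbthm (Imp (Cond (Neg (Iff p q)) Bot) (Iff (Cond p c) (Cond q c)))"
| RCK: "ps \<noteq> [] \<Longrightarrow> \<forall>x\<in>set ps. propf x \<Longrightarrow> propf p \<Longrightarrow> propf q \<Longrightarrow>
          sbthm (Imp (conj ps) p) \<Longrightarrow>
          sbthm (Imp (conj (map (Cond q) ps)) (Cond q p))"
| S5F: "ls \<noteq> [] \<Longrightarrow> \<forall>l\<in>set ls. literal l \<Longrightarrow> propf c \<Longrightarrow>
          sbthm (Imp (conj ls) c) \<Longrightarrow>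
          sbthm (Imp (conj ls) (Cond (Neg c) Bot))"
| KB: "wf a \<Longrightarrow> wf b \<Longrightarrow> sbthm (Imp (Bel (Imp a b)) (Imp (Bel a) (Bel b)))"
| DB: "wf a \<Longrightarrow> sbthm (Imp (Bel a) (Neg (Bel (Neg a))))"
| FourB: "wf a \<Longrightarrow> sbthm (Imp (Bel a) (Bel (Bel a)))"
| Nec: "sbthm a \<Longrightarrow> sbthm (Bel a)"

definition derives :: "fm set \<Rightarrow> fm \<Rightarrow> bool" where
  "derives G a \<longleftrightarrow> (\<exists>L. set L \<subseteq> G \<and> sbthm (foldr Imp L a))"

definition MCS :: "fm set \<Rightarrow> bool" where
  "MCS G \<longleftrightarrow> G \<subseteq> {a. wf a} \<and> \<not> derives G Bot \<and>
     (\<forall>a. wf a \<longrightarrow> a \<in> G \<or> Neg a \<in> G)"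

definition cond_part :: "fm set \<Rightarrow> fm set" where
  "cond_part G = {x \<in> G. \<exists>a b. x = Cond a b}"

definition cond_class :: "fm set \<Rightarrow> fm set set" where
  "cond_class G = {D. MCS D \<and> cond_part D = cond_part G}"

definition cons_of :: "fm \<Rightarrow> fm set \<Rightarrow> fm set" where
  "cons_of p G = {q. Cond p q \<in> G}"

end

theory Submission
  imports Defs
begin

text \<open>Extend the literals of \<open>\<Gamma>\<close> (its conditionals and negated conditionals), the
consequents \<open>\<rightsquigarrow>\<^sub>\<phi>(\<Gamma>)\<close> and \<open>\<not>\<psi>\<close> to a maximal consistent set; since it contains every
literal of \<open>\<Gamma>\<close>, it has the same conditionals as \<open>\<Gamma>\<close>. This set is consistent: otherwise
finitely many literals of \<open>\<Gamma>\<close> prove \<open>\<chi> = \<psi>\<^sub>1 \<rightarrow> \<dots> \<rightarrow> \<psi>\<^sub>n \<rightarrow> \<psi>\<close> for consequents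
\<open>\<psi>\<^sub>i \<in> \<rightsquigarrow>\<^sub>\<phi>(\<Gamma>)\<close>. Rule \<open>S5\<^sub>F\<close> turns this into \<open>\<not>(\<phi> \<leftrightarrow> \<phi> \<and> \<chi>) \<rightsquigarrow> \<bottom> \<in> \<Gamma>\<close>, so the
extensionality axiom transfers the theorem \<open>\<phi> \<and> \<chi> \<rightsquigarrow> \<chi>\<close> to \<open>\<phi> \<rightsquigarrow> \<chi> \<in> \<Gamma>\<close>, and RCK
yields \<open>\<phi> \<rightsquigarrow> \<psi> \<in> \<Gamma>\<close>.\<close>

lemma eval_foldr_Imp: "eval v (foldr Imp L a) = ((\<forall>x\<in>set L. eval v x) \<longrightarrow> eval v a)"
  by (induction L) auto

lemma wf_foldr_Imp: "wf (foldr Imp L a) = ((\<forall>x\<in>set L. wf x) \<and> wf a)"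
  by (induction L) auto

lemma eval_conj: "eval v (conj xs) = (\<forall>x\<in>set xs. eval v x)"
  by (induction xs rule: conj.induct) (auto simp: Top_def)

lemma wf_conj: "wf (conj xs) = (\<forall>x\<in>set xs. wf x)"
  by (induction xs rule: conj.induct) (auto simp: Top_def)

lemma propf_imp_wf: "propf a \<Longrightarrow> wf a"
  by (induction a) auto

lemma propf_not_literal: "propf a \<Longrightarrow> \<not> literal a"
  by (auto simp: literal_def)

lemma sbthm_imp_wf: "sbthm a \<Longrightarrow> wf a"
  by (induction rule: sbthm.induct) (auto simp: wf_conj propf_imp_wf literal_def)


lemma sbthm_foldr_Imp_MP: "sbthm (foldr Imp As c) \<Longrightarrow> \<forall>a\<in>set As. sbthm a \<Longrightarrow> sbthm c"
  by (induction As) (auto intro: MP)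

lemma sbthm_tautological_consequence:
  assumes "\<forall>a\<in>set As. sbthm a" and "wf c" and "\<And>v. \<forall>a\<in>set As. eval v a \<Longrightarrow> eval v c"
  shows "sbthm c"
proof (rule sbthm_foldr_Imp_MP[OF Taut assms(1)])
  show "wf (foldr Imp As c)"
    using assms(1,2) sbthm_imp_wf by (auto simp: wf_foldr_Imp)
  show "tautology (foldr Imp As c)"
    using assms(3) by (simp add: tautology_def eval_foldr_Imp)
qed

lemma MCS_wf: "MCS G \<Longrightarrow> a \<in> G \<Longrightarrow> wf a"
  by (auto simp: MCS_def)

lemma MCS_Neg_if_not_mem: "MCS G \<Longrightarrow> wf a \<Longrightarrow> a \<notin> G \<Longrightarrow> Neg a \<in> G"
  by (auto simp: MCS_def)

lemma MCS_not_both: "MCS G \<Longrightarrow> a \<in> G \<Longrightarrow> Neg a \<in> G \<Longrightarrow> False"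
proof -
  assume G: "MCS G" and a: "a \<in> G" "Neg a \<in> G"
  have "sbthm (foldr Imp [a, Neg a] Bot)"
    by (rule sbthm_tautological_consequence[of "[]"]) (use MCS_wf[OF G a(1)] in auto)
  then have "derives G Bot"
    unfolding derives_def using a by (intro exI[of _ "[a, Neg a]"]) auto
  then show False using G by (simp add: MCS_def)
qed

lemma MCS_tautological_consequence:
  assumes G: "MCS G" and "\<forall>a\<in>set As. sbthm a" and xs: "set xs \<subseteq> G" and "wf b"
    and "\<And>v. \<forall>a\<in>set As. eval v a \<Longrightarrow> \<forall>x\<in>set xs. eval v x \<Longrightarrow> eval v b"
  shows "b \<in> G"
proof (rule ccontr)
  assume "b \<notin> G"
  then have nb: "Neg b \<in> G" using MCS_Neg_if_not_mem[OF G \<open>wf b\<close>] by simp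
  have "sbthm (foldr Imp (Neg b # xs) Bot)"
  proof (rule sbthm_tautological_consequence)
    show "wf (foldr Imp (Neg b # xs) Bot)"
      using xs \<open>wf b\<close> MCS_wf[OF G] by (auto simp: wf_foldr_Imp)
  qed (use assms(2) in \<open>auto simp: eval_foldr_Imp dest: assms(5)\<close>)
  then have "derives G Bot"
    unfolding derives_def using xs nb by (intro exI[of _ "Neg b # xs"]) auto
  then show False using G by (simp add: MCS_def)
qed


lemma derives_Union_chain:
  assumes "derives (\<Union>C) a" and "C \<noteq> {}" and "subset.chain A C"
  obtains X where "X \<in> C" and "derives X a"
proof -
  obtain L where L: "set L \<subseteq> \<Union>C" "sbthm (foldr Imp L a)"
    using assms(1) by (auto simp: derives_def)
  obtain X where "X \<in> C" "set L \<subseteq> X"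
    using finite_subset_Union_chain[OF finite_set L(1) assms(2,3)] .
  then show thesis using that L(2) by (auto simp: derives_def)
qed

lemma derives_Bot_by_cases:
  assumes M: "M \<subseteq> {a. wf a}"
    and "derives (insert a M) Bot" and "derives (insert (Neg a) M) Bot"
  shows "derives M Bot"
proof -
  obtain L1 L2 where L1: "set L1 \<subseteq> insert a M" "sbthm (foldr Imp L1 Bot)"
    and L2: "set L2 \<subseteq> insert (Neg a) M" "sbthm (foldr Imp L2 Bot)"
    using assms(2,3) by (auto simp: derives_def)
  define L where "L = filter (\<lambda>x. x \<noteq> a) L1 @ filter (\<lambda>x. x \<noteq> Neg a) L2"
  have LM: "set L \<subseteq> M" unfolding L_def using L1 L2 by auto
  have "sbthm (foldr Imp L Bot)"
  proof (rule sbthm_tautological_consequence[of "[foldr Imp L1 Bot, foldr Imp L2 Bot]"])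
    show "wf (foldr Imp L Bot)" using LM M by (auto simp: wf_foldr_Imp)
    fix v
    assume "\<forall>x\<in>set [foldr Imp L1 Bot, foldr Imp L2 Bot]. eval v x"
    then show "eval v (foldr Imp L Bot)"
      by (cases "eval v a") (auto simp: eval_foldr_Imp L_def)
  qed (use L1 L2 in auto)
  then show ?thesis using LM by (auto simp: derives_def)
qed

lemma maximal_consistent_imp_MCS:
  assumes M: "M \<subseteq> {a. wf a}" and cons: "\<not> derives M Bot"
    and max: "\<And>b. wf b \<Longrightarrow> b \<notin> M \<Longrightarrow> derives (insert b M) Bot"
  shows "MCS M"
  unfolding MCS_def
proof (intro conjI allI impI M cons)
  fix a
  assume "wf a"
  then show "a \<in> M \<or> Neg a \<in> M"
    using derives_Bot_by_cases[OF M] max[of a] max[of "Neg a"] cons by auto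
qed

lemma lindenbaum:
  assumes "S \<subseteq> {a. wf a}" and "\<not> derives S Bot"
  obtains D where "MCS D" and "S \<subseteq> D"
proof -
  define A where "A = {X. S \<subseteq> X \<and> X \<subseteq> {a. wf a} \<and> \<not> derives X Bot}"
  have "\<exists>M\<in>A. \<forall>X\<in>A. M \<subseteq> X \<longrightarrow> X = M"
  proof (rule subset_Zorn_nonempty)
    show "A \<noteq> {}" using assms unfolding A_def by auto
  next
    fix C
    assume C: "C \<noteq> {}" "subset.chain A C"
    then have "C \<subseteq> A" by (simp add: subset_chain_def)
    moreover have "\<not> derives (\<Union>C) Bot"
    proof
      assume "derives (\<Union>C) Bot"
      then obtain X where "X \<in> C" and "derives X Bot"
        using derives_Union_chain[OF _ C] by blast
      then show False using \<open>C \<subseteq> A\<close> by (auto simp: A_def)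
    qed
    ultimately show "\<Union>C \<in> A" using C(1) by (auto simp: A_def)
  qed
  then obtain M where "M \<in> A" and max: "\<forall>X\<in>A. M \<subseteq> X \<longrightarrow> X = M" by auto
  have "MCS M"
  proof (rule maximal_consistent_imp_MCS)
    show "M \<subseteq> {a. wf a}" and "\<not> derives M Bot" using \<open>M \<in> A\<close> by (auto simp: A_def)
    fix b
    assume "wf b" and "b \<notin> M"
    then have "insert b M \<notin> A" using max by blast
    then show "derives (insert b M) Bot" using \<open>M \<in> A\<close> \<open>wf b\<close> by (auto simp: A_def)
  qed
  then show thesis using that \<open>M \<in> A\<close> by (auto simp: A_def)
qed


lemma MCS_Cond_self: "MCS G \<Longrightarrow> propf p \<Longrightarrow> Cond p p \<in> G"
  by (rule MCS_tautological_consequence[of G "[Cond p p]" "[]"]) (auto intro: Id)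

lemma MCS_cons_of_propf: "MCS G \<Longrightarrow> q \<in> cons_of p G \<Longrightarrow> propf q"
  by (auto simp: cons_of_def dest: MCS_wf)

lemma sbthm_Cond_And_right:
  assumes "propf p" and "propf c"
  shows "sbthm (Cond (And p c) c)"
proof -
  have "sbthm (Imp (And p c) c)"
    by (rule sbthm_tautological_consequence[of "[]"]) (use assms in \<open>auto simp: propf_imp_wf\<close>)
  then have "sbthm (Imp (conj [Cond (And p c) (And p c)]) (Cond (And p c) c))"
    using RCK[of "[And p c]" c "And p c"] assms by simp
  then show ?thesis using MP[OF Id[of "And p c"]] assms by simp
qed

lemma MCS_Cond_if_implied_by_literals:
  assumes G: "MCS G" and p: "propf p" and c: "propf c"
    and ls: "set ls \<subseteq> G" "\<forall>l\<in>set ls. literal l" and "sbthm (Imp (conj ls) c)"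
  shows "Cond p c \<in> G"
proof -
  \<comment> \<open>\<open>S5\<^sub>F\<close> needs a nonempty list of literals.\<close>
  define ls' where "ls' = Cond p p # ls"
  have ls': "set ls' \<subseteq> G" "\<forall>l\<in>set ls'. literal l"
    using ls MCS_Cond_self[OF G p] p by (auto simp: ls'_def literal_def)
  define B where "B = Cond (Neg (Iff p (And p c))) Bot"
  have "sbthm (Imp (conj ls') (Iff p (And p c)))"
    by (rule sbthm_tautological_consequence[of "[Imp (conj ls) c]"])
      (use assms ls' MCS_wf[OF G] in \<open>auto simp: wf_conj eval_conj propf_imp_wf ls'_def\<close>)
  then have S5: "sbthm (Imp (conj ls') B)"
    unfolding B_def by (rule S5F[rotated -1]) (use ls' p c in \<open>auto simp: ls'_def\<close>)
  have "B \<in> G"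
    by (rule MCS_tautological_consequence[OF G, of "[Imp (conj ls') B]" ls'])
      (use S5 ls'(1) p c in \<open>auto simp: B_def eval_conj\<close>)
  \<comment> \<open>\<open>p\<close> and \<open>p \<and> c\<close> are now necessarily equivalent, so they have the same consequents.\<close>
  show ?thesis
    by (rule MCS_tautological_consequence[OF G,
          of "[Imp B (Iff (Cond p c) (Cond (And p c) c)), Cond (And p c) c]" "[B]"])
      (use \<open>B \<in> G\<close> Ext[of p "And p c" c] sbthm_Cond_And_right[OF p c] p c in \<open>auto simp: B_def\<close>)
qed

lemma cons_of_closed:
  assumes G: "MCS G" and p: "propf p" and q: "propf q"
    and ps: "set ps \<subseteq> cons_of p G" "ps \<noteq> []" and "sbthm (Imp (conj ps) q)"
  shows "q \<in> cons_of p G"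
proof -
  have "sbthm (Imp (conj (map (Cond p) ps)) (Cond p q))"
    using RCK[OF ps(2) _ q p] assms MCS_cons_of_propf by blast
  then have "Cond p q \<in> G"
    using ps p q by (intro MCS_tautological_consequence[OF G,
        of "[Imp (conj (map (Cond p) ps)) (Cond p q)]" "map (Cond p) ps"])
      (auto simp: cons_of_def eval_conj)
  then show ?thesis by (simp add: cons_of_def)
qed

lemma consistent_literals_cons_of_Neg:
  assumes G: "MCS G" and p: "propf p" and q: "propf q" and "q \<notin> cons_of p G"
  shows "\<not> derives ({l \<in> G. literal l} \<union> cons_of p G \<union> {Neg q}) Bot"
proof
  assume "derives ({l \<in> G. literal l} \<union> cons_of p G \<union> {Neg q}) Bot"
  then obtain L where L: "set L \<subseteq> {l \<in> G. literal l} \<union> cons_of p G \<union> {Neg q}"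
    "sbthm (foldr Imp L Bot)"
    by (auto simp: derives_def)
  define ls where "ls = filter literal L"
  define ps where "ps = filter (\<lambda>x. \<not> literal x \<and> x \<noteq> Neg q) L"
  define chi where "chi = foldr Imp ps q"
  have ls: "set ls \<subseteq> G" "\<forall>l\<in>set ls. literal l"
    using L(1) propf_not_literal[of "Neg q"] q propf_not_literal MCS_cons_of_propf[OF G]
    by (fastforce simp: ls_def)+
  have ps: "set ps \<subseteq> cons_of p G" "\<forall>x\<in>set ps. propf x"
    using L(1) MCS_cons_of_propf[OF G] by (auto simp: ps_def)
  have chi: "propf chi"
    unfolding chi_def using ps(2) q by (induction ps) auto
  have "sbthm (Imp (conj ls) chi)"
  proof (rule sbthm_tautological_consequence[of "[foldr Imp L Bot]"])
    show "wf (Imp (conj ls) chi)"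
      using ls(1) MCS_wf[OF G] chi by (auto simp: wf_conj propf_imp_wf)
    fix v
    assume "\<forall>a\<in>set [foldr Imp L Bot]. eval v a"
    then have "\<not> (\<forall>x\<in>set L. eval v x)" by (simp add: eval_foldr_Imp)
    moreover have "x \<in> set ls \<or> x \<in> set ps \<or> x = Neg q" if "x \<in> set L" for x
      using that by (auto simp: ls_def ps_def)
    ultimately show "eval v (Imp (conj ls) chi)"
      by (simp add: eval_conj chi_def eval_foldr_Imp) (metis eval.simps(7))
  qed (use L(2) in simp)
  then have "chi \<in> cons_of p G"
    using MCS_Cond_if_implied_by_literals[OF G p chi ls] by (simp add: cons_of_def)
  moreover have "sbthm (Imp (conj (chi # ps)) q)"
    by (rule sbthm_tautological_consequence[of "[]"])
      (use chi ps(2) q in \<open>auto simp: wf_conj propf_imp_wf eval_conj chi_def eval_foldr_Imp\<close>)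
  ultimately have "q \<in> cons_of p G"
    using cons_of_closed[OF G p q, of "chi # ps"] ps(1) by simp
  then show False using assms(4) by simp
qed

lemma cond_part_eq_if_literals_subset:
  assumes G: "MCS G" and D: "MCS D" and lits: "{l \<in> G. literal l} \<subseteq> D"
  shows "cond_part D = cond_part G"
proof -
  have "Cond a b \<in> D \<longleftrightarrow> Cond a b \<in> G" if "propf a" "propf b" for a b
  proof
    assume "Cond a b \<in> D"
    show "Cond a b \<in> G"
    proof (rule ccontr)
      assume "Cond a b \<notin> G"
      then have "Neg (Cond a b) \<in> G" using MCS_Neg_if_not_mem[OF G] that by simp
      then have "Neg (Cond a b) \<in> D" using lits that by (auto simp: literal_def)
      then show False using MCS_not_both[OF D \<open>Cond a b \<in> D\<close>] by simp
    qed
  next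
    assume "Cond a b \<in> G"
    then show "Cond a b \<in> D" using lits that by (auto simp: literal_def)
  qed
  moreover have "propf a \<and> propf b" if "Cond a b \<in> D \<or> Cond a b \<in> G" for a b
    using that MCS_wf[OF D] MCS_wf[OF G] by fastforce
  ultimately show ?thesis by (auto simp: cond_part_def)
qed

theorem lemma1:
  assumes "MCS G" and "propf p" and "propf q" and "q \<notin> cons_of p G"
  shows "\<exists>D. MCS D \<and> D \<in> cond_class G \<and> insert (Neg q) (cons_of p G) \<subseteq> D"
proof -
  let ?S = "{l \<in> G. literal l} \<union> cons_of p G \<union> {Neg q}"
  have "?S \<subseteq> {a. wf a}"
    using assms(1,3) MCS_wf MCS_cons_of_propf propf_imp_wf by auto
  then obtain D where "MCS D" and "?S \<subseteq> D"
    using lindenbaum consistent_literals_cons_of_Neg[OF assms] by blast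
  moreover have "cond_part D = cond_part G"
    using cond_part_eq_if_literals_subset[OF assms(1) \<open>MCS D\<close>] \<open>?S \<subseteq> D\<close> by blast
  ultimately show ?thesis by (auto simp: cond_class_def)
qed

end
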